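(* Let $G=(V,E)$ be a non-separable graph with $|V|\ge 3$ and let $x\in V$ with $d(x)\le 3$. If $G-e$ is non-separable for every edge $e$ incident with $x$, then $G/e'$ is non-separable for every edge $e'$ incident with $x$.
   Context: Graphs are finite, undirected, possibly with loops and parallel edges; $d(x)$ counts each loop at $x$ twice. A graph is non-separable if it is connected, has no cut-vertex, and either has no loops or has exactly one vertex and one edge. $G/e$ denotes contraction of the edge $e$. *)

theory Defs
  imports Main
begin

text \<open>Finite multigraphs with loops and parallel edges. Each edge e has a set of
  ends (one element for a loop, two for a non-loop edge).\<close>

record ('v, 'e) mgraph =
  verts :: "'v set"
  edges :: "'e set"
  ends  :: "'e \<Rightarrow> 'v set"

definition wf_graph :: "('v, 'e) mgraph \<Rightarrow> bool" where
  "wf_graph G \<longleftrightarrow> finite (verts G) \<and> finite (edges G) \<and>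
     (\<forall>e\<in>edges G. ends G e \<subseteq> verts G \<and> ends G e \<noteq> {} \<and> card (ends G e) \<le> 2)"

definition is_loop :: "('v, 'e) mgraph \<Rightarrow> 'e \<Rightarrow> bool" where
  "is_loop G e \<longleftrightarrow> card (ends G e) = 1"

definition degree :: "('v, 'e) mgraph \<Rightarrow> 'v \<Rightarrow> nat" where
  "degree G x = (\<Sum>e\<in>edges G. if ends G e = {x} then 2 else if x \<in> ends G e then 1 else 0)"

definition adj :: "('v, 'e) mgraph \<Rightarrow> ('v \<times> 'v) set" where
  "adj G = {(u, v). \<exists>e\<in>edges G. ends G e = {u, v}}"

definition connected :: "('v, 'e) mgraph \<Rightarrow> bool" where
  "connected G \<longleftrightarrow> verts G \<noteq> {} \<and> (\<forall>u\<in>verts G. \<forall>v\<in>verts G. (u, v) \<in> (adj G)\<^sup>*)"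

definition delete_vertex :: "('v, 'e) mgraph \<Rightarrow> 'v \<Rightarrow> ('v, 'e) mgraph" where
  "delete_vertex G v = \<lparr>verts = verts G - {v}, edges = {e\<in>edges G. v \<notin> ends G e}, ends = ends G\<rparr>"

definition delete_edge :: "('v, 'e) mgraph \<Rightarrow> 'e \<Rightarrow> ('v, 'e) mgraph" where
  "delete_edge G e = \<lparr>verts = verts G, edges = edges G - {e}, ends = ends G\<rparr>"

definition cut_vertex :: "('v, 'e) mgraph \<Rightarrow> 'v \<Rightarrow> bool" where
  "cut_vertex G v \<longleftrightarrow> v \<in> verts G \<and>
     (\<exists>u\<in>verts G - {v}. \<exists>w\<in>verts G - {v}. (u, w) \<notin> (adj (delete_vertex G v))\<^sup>*)"

definition nonseparable :: "('v, 'e) mgraph \<Rightarrow> bool" where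
  "nonseparable G \<longleftrightarrow> connected G \<and> (\<forall>v\<in>verts G. \<not> cut_vertex G v) \<and>
     ((\<forall>e\<in>edges G. \<not> is_loop G e) \<or> (card (verts G) = 1 \<and> card (edges G) = 1))"

definition contract :: "('v, 'e) mgraph \<Rightarrow> 'e \<Rightarrow> ('v, 'e) mgraph" where
  "contract G e =
    (if is_loop G e then delete_edge G e
     else (let u = (SOME u. u \<in> ends G e);
               w = (SOME w. w \<in> ends G e \<and> w \<noteq> u);
               f = (\<lambda>z. if z = w then u else z)
           in \<lparr>verts = verts G - {w}, edges = edges G - {e},
               ends = (\<lambda>d. f ` ends G d)\<rparr>))"

end

theory Submission
  imports Defs
begin

text \<open>G has no loops, so besides e = xy and an edge f at x avoiding y (there is one as y
  is not a cut-vertex) at most one further edge is incident with x. Since G - f is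
  non-separable, x has at most one neighbour in G - f - y, hence G - x - y is connected; and e
  has no parallel edge, as it and the edge at x of G - f - y would be two further edges.
  For a non-separable G with at least three vertices these two properties make G/e
  non-separable: the merged vertex is no cut-vertex because G - x - y is connected, and any
  other vertex v is none because a path in G - v maps to a path in G/e - v.\<close>

lemma rtrancl_map:
  assumes "(a, b) \<in> R\<^sup>*" and "\<And>p q. (p, q) \<in> R \<Longrightarrow> f p = f q \<or> (f p, f q) \<in> S"
  shows "(f a, f b) \<in> S\<^sup>*"
  using assms(1)
proof (induction rule: rtrancl_induct)
  case (step y z)
  with assms(2)[OF step(2)] show ?case by (auto intro: rtrancl_into_rtrancl)
qed simp

lemma rtrancl_first_step_away: "(a, b) \<in> R\<^sup>* \<Longrightarrow> a \<noteq> b \<Longrightarrow> \<exists>z. (a, z) \<in> R \<and> z \<noteq> a"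
  by (induction rule: converse_rtrancl_induct) auto

lemma rtrancl_avoid_leaf:
  assumes "(s, t) \<in> R\<^sup>*" "s \<noteq> x" "t \<noteq> x"
    and sym: "\<And>z. (z, x) \<in> R \<Longrightarrow> (x, z) \<in> R"
    and leaf: "\<And>z1 z2. (x, z1) \<in> R \<Longrightarrow> z1 \<noteq> x \<Longrightarrow> (x, z2) \<in> R \<Longrightarrow> z2 \<noteq> x \<Longrightarrow> z1 = z2"
  shows "(s, t) \<in> {(p, q). (p, q) \<in> R \<and> p \<noteq> x \<and> q \<noteq> x}\<^sup>*"
proof -
  let ?R' = "{(p, q). (p, q) \<in> R \<and> p \<noteq> x \<and> q \<noteq> x}"
  \<comment> \<open>A walk that has entered x can only have done so from its unique neighbour c.\<close>
  have "(t \<noteq> x \<longrightarrow> (s, t) \<in> ?R'\<^sup>*) \<and> (t = x \<longrightarrow> (\<exists>c. c \<noteq> x \<and> (x, c) \<in> R \<and> (s, c) \<in> ?R'\<^sup>*))"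
    using assms(1)
  proof (induction rule: rtrancl_induct)
    case base
    with assms(2) show ?case by simp
  next
    case (step y z)
    show ?case
    proof (cases "y = x")
      case True
      then obtain c where c: "c \<noteq> x" "(x, c) \<in> R" "(s, c) \<in> ?R'\<^sup>*"
        using step.IH by blast
      with step(2) True leaf[of c z] show ?thesis by (cases "z = x") auto
    next
      case False
      then have sy: "(s, y) \<in> ?R'\<^sup>*" using step.IH by blast
      show ?thesis
      proof (cases "z = x")
        case True
        with step(2) sym sy False show ?thesis by blast
      next
        case False
        with \<open>y \<noteq> x\<close> step(2) sy show ?thesis by (auto intro: rtrancl_into_rtrancl)
      qed
    qed
  qed
  with assms(3) show ?thesis by simp
qed

lemma adj_sym: "(a, b) \<in> adj G \<Longrightarrow> (b, a) \<in> adj G"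
  unfolding adj_def by (auto simp: insert_commute)

lemma delete_vertex_commute:
  "delete_vertex (delete_vertex G a) b = delete_vertex (delete_vertex G b) a"
  by (auto simp: delete_vertex_def)

lemma nonseparable_path_avoiding:
  assumes "nonseparable G" "v \<in> verts G" "s \<in> verts G - {v}" "t \<in> verts G - {v}"
  shows "(s, t) \<in> (adj (delete_vertex G v))\<^sup>*"
  using assms by (auto simp: nonseparable_def cut_vertex_def)

lemma nonseparable_edge_two_ends:
  assumes "wf_graph G" "nonseparable G" "card (verts G) \<ge> 2" "d \<in> edges G"
  shows "\<exists>p q. p \<noteq> q \<and> ends G d = {p, q}"
proof -
  have "\<not> is_loop G d" using assms(2-4) by (auto simp: nonseparable_def)
  moreover have "finite (ends G d)" "ends G d \<noteq> {}" "card (ends G d) \<le> 2"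
    using assms(1,4) finite_subset by (auto simp: wf_graph_def)
  ultimately have "card (ends G d) = 2"
    unfolding is_loop_def using card_gt_0_iff[of "ends G d"] by linarith
  then show ?thesis by (auto simp: card_2_iff)
qed

lemma nonseparable_neighbour_avoiding:
  assumes "nonseparable G" "card (verts G) \<ge> 3" "x \<in> verts G" "y \<in> verts G" "x \<noteq> y"
  obtains z where "(x, z) \<in> adj (delete_vertex G y)" "z \<noteq> x"
proof -
  have "\<not> verts G \<subseteq> {x, y}"
  proof
    assume "verts G \<subseteq> {x, y}"
    then have "card (verts G) \<le> card {x, y}" by (simp add: card_mono)
    also have "\<dots> \<le> 2" by (simp add: card_insert_if)
    finally show False using assms(2) by simp
  qed
  then obtain s where s: "s \<in> verts G" "s \<noteq> x" "s \<noteq> y" by blast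
  have "(x, s) \<in> (adj (delete_vertex G y))\<^sup>*"
    using assms(1,3-5) s by (intro nonseparable_path_avoiding) auto
  with s(2) show ?thesis using that rtrancl_first_step_away by metis
qed

lemma nonseparable_delete_leaf_connected:
  assumes "nonseparable G" "y \<in> verts G" "s \<in> verts G - {x, y}" "t \<in> verts G - {x, y}"
    and leaf: "\<And>z1 z2. (x, z1) \<in> adj (delete_vertex G y) \<Longrightarrow> z1 \<noteq> x \<Longrightarrow>
      (x, z2) \<in> adj (delete_vertex G y) \<Longrightarrow> z2 \<noteq> x \<Longrightarrow> z1 = z2"
  shows "(s, t) \<in> (adj (delete_vertex (delete_vertex G y) x))\<^sup>*"
proof -
  let ?R = "adj (delete_vertex G y)"
  have "(s, t) \<in> ?R\<^sup>*" using assms(1-4) by (intro nonseparable_path_avoiding) auto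
  then have "(s, t) \<in> {(p, q). (p, q) \<in> ?R \<and> p \<noteq> x \<and> q \<noteq> x}\<^sup>*"
    using assms(3,4) adj_sym leaf by (intro rtrancl_avoid_leaf) auto
  moreover have "{(p, q). (p, q) \<in> ?R \<and> p \<noteq> x \<and> q \<noteq> x} \<subseteq> adj (delete_vertex (delete_vertex G y) x)"
    by (auto simp: adj_def delete_vertex_def)
  ultimately show ?thesis using rtrancl_mono by blast
qed

definition contract_into :: "('v, 'e) mgraph \<Rightarrow> 'e \<Rightarrow> 'v \<Rightarrow> 'v \<Rightarrow> ('v, 'e) mgraph" where
  "contract_into G e u w = \<lparr>verts = verts G - {w}, edges = edges G - {e},
     ends = (\<lambda>d. (\<lambda>z. if z = w then u else z) ` ends G d)\<rparr>"

lemma contract_eq_contract_into: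
  assumes "ends G e = {a, b}" "a \<noteq> b"
  obtains u w where "{u, w} = {a, b}" "u \<noteq> w" "contract G e = contract_into G e u w"
proof -
  define u where "u = (SOME u. u \<in> ends G e)"
  define w where "w = (SOME w. w \<in> ends G e \<and> w \<noteq> u)"
  have u: "u \<in> ends G e" unfolding u_def by (rule someI[where x = a]) (simp add: assms(1))
  then have "\<exists>w. w \<in> ends G e \<and> w \<noteq> u" using assms by auto
  then have w: "w \<in> ends G e \<and> w \<noteq> u" unfolding w_def by (rule someI_ex)
  have "\<not> is_loop G e" using assms by (simp add: is_loop_def)
  then have "contract G e = contract_into G e u w"
    unfolding contract_def Let_def by (simp flip: u_def w_def add: contract_into_def)
  moreover have "{u, w} = {a, b}" using u w assms by auto
  ultimately show ?thesis using that w by blast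
qed

lemma delete_vertex_contract_into:
  assumes "v \<noteq> u" "v \<noteq> w"
  shows "delete_vertex (contract_into G e u w) v = contract_into (delete_vertex G v) e u w"
  using assms by (auto simp: delete_vertex_def contract_into_def)

lemma rtrancl_adj_contract_into:
  assumes "(s, t) \<in> (adj G)\<^sup>*" "s \<noteq> w" "t \<noteq> w" "ends G e = {u, w}"
  shows "(s, t) \<in> (adj (contract_into G e u w))\<^sup>*"
proof -
  let ?f = "\<lambda>z. if z = w then u else z"
  have "(?f s, ?f t) \<in> (adj (contract_into G e u w))\<^sup>*"
    using assms(1)
  proof (rule rtrancl_map)
    fix p q assume "(p, q) \<in> adj G"
    then obtain d where d: "d \<in> edges G" "ends G d = {p, q}" by (auto simp: adj_def)
    show "?f p = ?f q \<or> (?f p, ?f q) \<in> adj (contract_into G e u w)"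
    proof (cases "d = e")
      case True
      with d assms(4) have "p \<in> {u, w}" "q \<in> {u, w}" by blast+
      then show ?thesis by auto
    next
      case False
      with d have "d \<in> edges (contract_into G e u w)"
        and "ends (contract_into G e u w) d = {?f p, ?f q}"
        by (simp_all add: contract_into_def)
      then show ?thesis unfolding adj_def by blast
    qed
  qed
  with assms(2,3) show ?thesis by simp
qed

lemma adj_delete_ends_subset_contract_into:
  assumes "ends G e = {u, w}"
  shows "adj (delete_vertex (delete_vertex G u) w) \<subseteq> adj (delete_vertex (contract_into G e u w) u)"
proof (rule subrelI)
  fix p q assume "(p, q) \<in> adj (delete_vertex (delete_vertex G u) w)"
  then obtain d where d: "d \<in> edges G" "u \<notin> ends G d" "w \<notin> ends G d" "ends G d = {p, q}"
    by (auto simp: adj_def delete_vertex_def)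
  with assms have "d \<in> edges (delete_vertex (contract_into G e u w) u)"
    and "ends (delete_vertex (contract_into G e u w) u) d = {p, q}"
    by (auto simp: delete_vertex_def contract_into_def)
  then show "(p, q) \<in> adj (delete_vertex (contract_into G e u w) u)" by (auto simp: adj_def)
qed

lemma is_loop_contract_into:
  assumes "ends G d = {p, q}" "p \<noteq> q" "u \<noteq> w"
  shows "is_loop (contract_into G e u w) d \<longleftrightarrow> {p, q} = {u, w}"
proof -
  define a b where "a = (if p = w then u else p)" and "b = (if q = w then u else q)"
  have "ends (contract_into G e u w) d = {a, b}" using assms(1) by (simp add: contract_into_def a_def b_def)
  moreover have "a = b \<longleftrightarrow> {p, q} = {u, w}" using assms(2,3) by (auto simp: a_def b_def doubleton_eq_iff)
  moreover have "card {a, b} = 1 \<longleftrightarrow> a = b" by (simp add: card_insert_if)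
  ultimately show ?thesis by (simp add: is_loop_def)
qed

lemma nonseparable_contract_into:
  assumes wf: "wf_graph G" and ns: "nonseparable G" and three: "card (verts G) \<ge> 3"
    and e: "e \<in> edges G" "ends G e = {u, w}" "u \<noteq> w"
    and no_parallel: "\<And>d. d \<in> edges G \<Longrightarrow> d \<noteq> e \<Longrightarrow> ends G d \<noteq> {u, w}"
    and rest_connected: "\<And>s t. s \<in> verts G - {u, w} \<Longrightarrow> t \<in> verts G - {u, w} \<Longrightarrow>
      (s, t) \<in> (adj (delete_vertex (delete_vertex G u) w))\<^sup>*"
  shows "nonseparable (contract_into G e u w)" (is "nonseparable ?H")
proof -
  have "verts ?H \<noteq> {}"
  proof
    assume "verts ?H = {}"
    then have "verts G \<subseteq> {w}" by (auto simp: contract_into_def)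
    then have "card (verts G) \<le> 1" using card_mono[of "{w}"] by simp
    with three show False by simp
  qed
  moreover have "(s, t) \<in> (adj ?H)\<^sup>*" if "s \<in> verts ?H" "t \<in> verts ?H" for s t
  proof -
    have "(s, t) \<in> (adj G)\<^sup>*" using ns that by (auto simp: nonseparable_def connected_def contract_into_def)
    with that e(2) show ?thesis by (intro rtrancl_adj_contract_into) (auto simp: contract_into_def)
  qed
  ultimately have "connected ?H" by (simp add: connected_def)
  moreover have "(s, t) \<in> (adj (delete_vertex ?H v))\<^sup>*"
    if v: "v \<in> verts ?H" and st: "s \<in> verts ?H - {v}" "t \<in> verts ?H - {v}" for v s t
  proof (cases "v = u")
    case True
    have "(s, t) \<in> (adj (delete_vertex (delete_vertex G u) w))\<^sup>*"
      using st True by (intro rest_connected) (auto simp: contract_into_def)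
    moreover note adj_delete_ends_subset_contract_into[OF e(2)]
    ultimately show ?thesis using True rtrancl_mono by blast
  next
    case False
    have vw: "v \<in> verts G" "v \<noteq> w" using v by (auto simp: contract_into_def)
    then have "(s, t) \<in> (adj (delete_vertex G v))\<^sup>*"
      using ns st by (intro nonseparable_path_avoiding) (auto simp: contract_into_def)
    then have "(s, t) \<in> (adj (contract_into (delete_vertex G v) e u w))\<^sup>*"
      using st e(2) by (intro rtrancl_adj_contract_into) (auto simp: contract_into_def delete_vertex_def)
    with False vw(2) show ?thesis by (simp add: delete_vertex_contract_into)
  qed
  then have "\<not> cut_vertex ?H v" for v by (auto simp: cut_vertex_def)
  moreover have "\<not> is_loop ?H d" if "d \<in> edges ?H" for d
  proof -
    have d: "d \<in> edges G" "d \<noteq> e" using that by (auto simp: contract_into_def)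
    obtain p q where pq: "ends G d = {p, q}" "p \<noteq> q"
      using nonseparable_edge_two_ends[OF wf ns _ d(1)] three by auto
    from no_parallel[OF d] pq(1) show ?thesis
      unfolding is_loop_contract_into[OF pq e(3)] by simp
  qed
  ultimately show ?thesis by (simp add: nonseparable_def)
qed

lemma nonseparable_contract:
  assumes "wf_graph G" "nonseparable G" "card (verts G) \<ge> 3"
    and "e \<in> edges G" "ends G e = {x, y}" "x \<noteq> y"
    and "\<And>d. d \<in> edges G \<Longrightarrow> d \<noteq> e \<Longrightarrow> ends G d \<noteq> ends G e"
    and rest_connected: "\<And>s t. s \<in> verts G - {x, y} \<Longrightarrow> t \<in> verts G - {x, y} \<Longrightarrow>
      (s, t) \<in> (adj (delete_vertex (delete_vertex G x) y))\<^sup>*"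
  shows "nonseparable (contract G e)"
proof -
  obtain u w where uw: "{u, w} = {x, y}" "u \<noteq> w" "contract G e = contract_into G e u w"
    using contract_eq_contract_into[OF assms(5,6)] .
  have ends_e: "ends G e = {u, w}" using assms(5) uw(1) by simp
  have "(u, w) = (x, y) \<or> (u, w) = (y, x)" using uw(1) by (auto simp: doubleton_eq_iff)
  then have "(s, t) \<in> (adj (delete_vertex (delete_vertex G u) w))\<^sup>*"
    if "s \<in> verts G - {u, w}" "t \<in> verts G - {u, w}" for s t
    using rest_connected[of s t] that uw(1) delete_vertex_commute[of G x y] by auto
  then show ?thesis
    unfolding uw(3) using assms(7) ends_e
    by (intro nonseparable_contract_into[OF assms(1-4) ends_e uw(2)]) auto
qed

lemma degree_eq_card_incident:
  assumes "finite (edges G)" "\<And>d. d \<in> edges G \<Longrightarrow> ends G d \<noteq> {x}"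
  shows "degree G x = card {d \<in> edges G. x \<in> ends G d}"
proof -
  have "degree G x = (\<Sum>d\<in>edges G. if x \<in> ends G d then 1 else 0)"
    unfolding degree_def using assms(2) by (intro sum.cong) auto
  also have "\<dots> = card {d \<in> edges G. x \<in> ends G d}"
    using assms(1) by (simp add: sum.inter_filter[symmetric])
  finally show ?thesis .
qed

locale edges_at_degree3_vertex =
  fixes G :: "('v, 'e) mgraph" and x y :: 'v and e f :: 'e
  assumes wf: "wf_graph G" and ns: "nonseparable G" and three: "card (verts G) \<ge> 3"
    and deg: "degree G x \<le> 3"
    and e: "e \<in> edges G" "ends G e = {x, y}" "x \<noteq> y"
    and f: "f \<in> edges G" "x \<in> ends G f" "y \<notin> ends G f"
    and ns_delete: "nonseparable (delete_edge G f)"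
begin

lemma further_edge_at_x_unique:
  assumes "d1 \<in> edges G - {e, f}" "d2 \<in> edges G - {e, f}" "x \<in> ends G d1" "x \<in> ends G d2"
  shows "d1 = d2"
proof (rule ccontr)
  assume "d1 \<noteq> d2"
  moreover have "e \<noteq> f" using e f by auto
  ultimately have "4 = card {e, f, d1, d2}" using assms by auto
  also have "\<dots> \<le> card {d \<in> edges G. x \<in> ends G d}"
    using assms e f wf by (intro card_mono) (auto simp: wf_graph_def)
  also have "\<dots> = degree G x"
    using wf ns three nonseparable_edge_two_ends[OF wf ns]
    by (intro degree_eq_card_incident[symmetric]) (fastforce simp: wf_graph_def)+
  finally show False using deg by simp
qed

lemma edge_at_x_in_delete:
  assumes "(x, w) \<in> adj (delete_vertex (delete_edge G f) y)"
  obtains d where "d \<in> edges G - {e, f}" "ends G d = {x, w}" "y \<notin> ends G d"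
proof -
  from assms obtain d where d: "d \<in> edges G - {f}" "ends G d = {x, w}" "y \<notin> ends G d"
    by (auto simp: adj_def delete_vertex_def delete_edge_def)
  moreover from d(3) e(2) have "d \<noteq> e" by auto
  ultimately show ?thesis using that by blast
qed

lemma no_parallel_edge:
  assumes "d \<in> edges G" "d \<noteq> e"
  shows "ends G d \<noteq> ends G e"
proof
  assume parallel: "ends G d = ends G e"
  have "card (verts (delete_edge G f)) \<ge> 3"
    and "x \<in> verts (delete_edge G f)" "y \<in> verts (delete_edge G f)"
    using three wf e by (auto simp: wf_graph_def delete_edge_def)
  then obtain w where "(x, w) \<in> adj (delete_vertex (delete_edge G f) y)"
    by (rule nonseparable_neighbour_avoiding[OF ns_delete _ _ _ e(3)])
  then obtain d' where d': "d' \<in> edges G - {e, f}" "ends G d' = {x, w}" "y \<notin> ends G d'"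
    by (rule edge_at_x_in_delete)
  have "d \<in> edges G - {e, f}" using assms parallel e f by auto
  with d' parallel e(2) have "d = d'" by (intro further_edge_at_x_unique) auto
  with d'(3) parallel e(2) show False by simp
qed

lemma rest_connected:
  assumes "s \<in> verts G - {x, y}" "t \<in> verts G - {x, y}"
  shows "(s, t) \<in> (adj (delete_vertex (delete_vertex G x) y))\<^sup>*"
proof -
  have "(s, t) \<in> (adj (delete_vertex (delete_vertex (delete_edge G f) y) x))\<^sup>*"
  proof (rule nonseparable_delete_leaf_connected[OF ns_delete])
    show "y \<in> verts (delete_edge G f)" using wf e by (auto simp: wf_graph_def delete_edge_def)
    show "s \<in> verts (delete_edge G f) - {x, y}" "t \<in> verts (delete_edge G f) - {x, y}"
      using assms by (auto simp: delete_edge_def)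
  next
    fix w1 w2
    assume "(x, w1) \<in> adj (delete_vertex (delete_edge G f) y)" "w1 \<noteq> x"
      and "(x, w2) \<in> adj (delete_vertex (delete_edge G f) y)"
    then obtain d1 d2 where "d1 \<in> edges G - {e, f}" "ends G d1 = {x, w1}"
      and "d2 \<in> edges G - {e, f}" "ends G d2 = {x, w2}"
      by (metis edge_at_x_in_delete)
    with further_edge_at_x_unique[of d1 d2] have "{x, w1} = {x, w2}" by auto
    with \<open>w1 \<noteq> x\<close> show "w1 = w2" by (auto simp: doubleton_eq_iff)
  qed
  moreover have "adj (delete_vertex (delete_vertex (delete_edge G f) y) x)
      \<subseteq> adj (delete_vertex (delete_vertex G x) y)"
    by (auto simp: adj_def delete_vertex_def delete_edge_def)
  ultimately show ?thesis using rtrancl_mono by blast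
qed

lemma nonseparable_contract_edge: "nonseparable (contract G e)"
  using nonseparable_contract[OF wf ns three e no_parallel_edge rest_connected] .

end

theorem lemma4p1:
  fixes G :: "('v, 'e) mgraph" and x :: 'v
  assumes "wf_graph G"
    and "nonseparable G"
    and "card (verts G) \<ge> 3"
    and "x \<in> verts G"
    and "degree G x \<le> 3"
    and "\<forall>e\<in>edges G. x \<in> ends G e \<longrightarrow> nonseparable (delete_edge G e)"
  shows "\<forall>e'\<in>edges G. x \<in> ends G e' \<longrightarrow> nonseparable (contract G e')"
proof (intro ballI impI)
  fix e assume e: "e \<in> edges G" "x \<in> ends G e"
  obtain p q where "p \<noteq> q" "ends G e = {p, q}"
    using nonseparable_edge_two_ends[OF assms(1,2) _ e(1)] assms(3) by auto
  with e(2) obtain y where y: "ends G e = {x, y}" "x \<noteq> y"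
    by (metis insert_commute insertE singletonD)
  have "y \<in> verts G" using assms(1) e(1) y(1) by (auto simp: wf_graph_def)
  then obtain z where "(x, z) \<in> adj (delete_vertex G y)"
    using nonseparable_neighbour_avoiding[OF assms(2-4)] y(2) by blast
  then obtain f where "f \<in> edges G" "x \<in> ends G f" "y \<notin> ends G f"
    by (auto simp: adj_def delete_vertex_def)
  then interpret edges_at_degree3_vertex G x y e f
    using assms e y by unfold_locales auto
  show "nonseparable (contract G e)" by (rule nonseparable_contract_edge)
qed

end
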